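(* For every positive integer $t$, let $s_{\max}(t)$ be the maximum size of a Sidon set in $\mathbb{F}_2^t$ and $s^{\mathrm{sf}}_{\max}(t)$ the maximum size of a sum-free Sidon set in $\mathbb{F}_2^t$. Then $s_{\max}(t) = s^{\mathrm{sf}}_{\max}(t)+1$.
   Context: $\mathbb{F}_2^t$ is the $t$-dimensional vector space over $\mathbb{F}_2$. A subset $M\subseteq\mathbb{F}_2^t$ is Sidon if $m_1+m_2\neq m_3+m_4$ for all pairwise distinct $m_1,m_2,m_3,m_4\in M$; it is sum-free if $m_1+m_2\neq m_3$ for all $m_1,m_2,m_3\in M$ (not necessarily distinct). *)

theory Defs
  imports "HOL-Analysis.Analysis" "HOL-Library.Z2"
begin

text \<open>F_2^t is rendered as the type bit ^ 'n, where 'n is a finite index type with CARD('n) = t.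
  Addition is componentwise addition in the field bit = F_2.\<close>

definition sidon :: "'a::ab_group_add set \<Rightarrow> bool" where
  "sidon M \<longleftrightarrow> (\<forall>m1\<in>M. \<forall>m2\<in>M. \<forall>m3\<in>M. \<forall>m4\<in>M.
      distinct [m1, m2, m3, m4] \<longrightarrow> m1 + m2 \<noteq> m3 + m4)"

definition sum_free :: "'a::ab_group_add set \<Rightarrow> bool" where
  "sum_free M \<longleftrightarrow> (\<forall>m1\<in>M. \<forall>m2\<in>M. \<forall>m3\<in>M. m1 + m2 \<noteq> m3)"

definition s_max :: "'n::finite itself \<Rightarrow> nat" where
  "s_max _ = Max {card M | M :: (bit ^ 'n) set. sidon M}"

definition s_sf_max :: "'n::finite itself \<Rightarrow> nat" where
  "s_sf_max _ = Max {card M | M :: (bit ^ 'n) set. sidon M \<and> sum_free M}"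

end

theory Submission
  imports Defs
begin

text \<open>Adjoining 0 to a sum-free Sidon set keeps it Sidon, because a relation involving 0
  would read x + y = z. Conversely, translate a nonempty Sidon set so that one of its elements
  becomes 0 and remove 0: in characteristic 2 a relation x + y = z among the remaining elements
  is the forbidden Sidon relation x + y = z + 0, and x + x = z would force z = 0.\<close>

instance bit :: finite
proof
  have "(UNIV :: bit set) = {0, 1}"
    using bit_not_zero_iff by blast
  then show "finite (UNIV :: bit set)"
    by (metis finite.emptyI finite_insert)
qed

lemma bit_vec_add_self: "(x :: bit ^ 'n) + x = 0"
  by (simp add: vec_eq_iff)

lemma sidon_subset: "sidon M \<Longrightarrow> N \<subseteq> M \<Longrightarrow> sidon N"
  unfolding sidon_def by blast

lemma sidon_translation:
  fixes M :: "'a::ab_group_add set"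
  assumes "sidon M"
  shows "sidon ((+) a ` M)"
  unfolding sidon_def
proof (intro ballI impI)
  fix m1 m2 m3 m4
  assume "m1 \<in> (+) a ` M" "m2 \<in> (+) a ` M" "m3 \<in> (+) a ` M" "m4 \<in> (+) a ` M"
    and distinct: "distinct [m1, m2, m3, m4]"
  then obtain x1 x2 x3 x4 where x: "x1 \<in> M" "x2 \<in> M" "x3 \<in> M" "x4 \<in> M"
    and m: "m1 = a + x1" "m2 = a + x2" "m3 = a + x3" "m4 = a + x4"
    by blast
  have "distinct [x1, x2, x3, x4]"
    using distinct by (auto simp: m)
  then have "x1 + x2 \<noteq> x3 + x4"
    using assms x unfolding sidon_def by blast
  then show "m1 + m2 \<noteq> m3 + m4"
    by (simp add: m algebra_simps)
qed

lemma zero_notin_sum_free: "sum_free S \<Longrightarrow> (0 :: 'a::ab_group_add) \<notin> S"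
  unfolding sum_free_def by force

lemma sidon_insert_zero:
  fixes S :: "'a::ab_group_add set"
  assumes sidon: "sidon S" and sum_free: "sum_free S"
  shows "sidon (insert 0 S)"
  unfolding sidon_def
proof (intro ballI impI notI)
  fix m1 m2 m3 m4
  assume m: "m1 \<in> insert 0 S" "m2 \<in> insert 0 S" "m3 \<in> insert 0 S" "m4 \<in> insert 0 S"
    and distinct: "distinct [m1, m2, m3, m4]" and eq: "m1 + m2 = m3 + m4"
  have no_sum: "a + b \<noteq> c" if "a \<in> S" "b \<in> S" "c \<in> S" for a b c
    using sum_free that unfolding sum_free_def by blast
  consider "m1 = 0" | "m2 = 0" | "m3 = 0" | "m4 = 0" | "m1 \<in> S" "m2 \<in> S" "m3 \<in> S" "m4 \<in> S"
    using m by blast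
  then show False
  proof cases
    case 1
    then show False using no_sum[of m3 m4 m2] m distinct eq by auto
  next
    case 2
    then show False using no_sum[of m3 m4 m1] m distinct eq by auto
  next
    case 3
    then show False using no_sum[of m1 m2 m4] m distinct eq by auto
  next
    case 4
    then show False using no_sum[of m1 m2 m3] m distinct eq by auto
  next
    case 5
    then show False using sidon distinct eq unfolding sidon_def by blast
  qed
qed

lemma sum_free_Diff_zero:
  fixes M :: "'a::ab_group_add set"
  assumes char_two: "\<And>x::'a. x + x = 0" and sidon: "sidon M" and "0 \<in> M"
  shows "sum_free (M - {0})"
  unfolding sum_free_def
proof (intro ballI notI)
  fix x y z
  assume xyz: "x \<in> M - {0}" "y \<in> M - {0}" "z \<in> M - {0}" and eq: "x + y = z"
  show False
  proof (cases "x = y")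
    case True
    then show False using char_two eq xyz by simp
  next
    case False
    with eq xyz have "distinct [x, y, z, 0]"
      by auto
    then show False
      using sidon xyz \<open>0 \<in> M\<close> eq unfolding sidon_def by fastforce
  qed
qed

lemma sum_free_sidon_from_sidon:
  fixes M :: "'a::ab_group_add set"
  assumes char_two: "\<And>x::'a. x + x = 0" and "sidon M" "finite M" "M \<noteq> {}"
  obtains S :: "'a set" where "sidon S" "sum_free S" "card S + 1 = card M"
proof -
  obtain a where "a \<in> M"
    using \<open>M \<noteq> {}\<close> by blast
  define T where "T = (+) (- a) ` M"
  have "sidon T"
    unfolding T_def using \<open>sidon M\<close> by (rule sidon_translation)
  have "0 \<in> T"
    unfolding T_def using \<open>a \<in> M\<close> by (rule rev_image_eqI) simp
  show thesis
  proof (rule that)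
    show "sidon (T - {0})"
      using \<open>sidon T\<close> by (rule sidon_subset) blast
    show "sum_free (T - {0})"
      using char_two \<open>sidon T\<close> \<open>0 \<in> T\<close> by (rule sum_free_Diff_zero)
    have "card T = card M"
      unfolding T_def by (simp add: card_image)
    moreover have "finite T"
      unfolding T_def using \<open>finite M\<close> by (rule finite_imageI)
    ultimately show "card (T - {0}) + 1 = card M"
      using \<open>0 \<in> T\<close> card_Diff1_less[of T 0] by simp
  qed
qed

lemma Max_card_sidon_eq_Max_card_sum_free_sidon_plus_one:
  assumes char_two: "\<And>x::'a::{ab_group_add, finite}. x + x = 0"
  shows "Max {card M | M :: 'a set. sidon M} = Max {card S | S :: 'a set. sidon S \<and> sum_free S} + 1"
    (is "Max ?A = Max ?B + 1")
proof (rule antisym)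
  have finite: "finite ?A" "finite ?B"
    by simp_all
  have "sidon ({} :: 'a set) \<and> sum_free ({} :: 'a set)"
    by (simp add: sidon_def sum_free_def)
  then have "?A \<noteq> {}" "?B \<noteq> {}"
    by blast+
  show "Max ?A \<le> Max ?B + 1"
  proof (rule Max.boundedI[OF finite(1) \<open>?A \<noteq> {}\<close>])
    fix m assume "m \<in> ?A"
    then obtain M :: "'a set" where "sidon M" "m = card M"
      by blast
    show "m \<le> Max ?B + 1"
    proof (cases "M = {}")
      case False
      then obtain S :: "'a set" where "sidon S" "sum_free S" "card S + 1 = card M"
        using sum_free_sidon_from_sidon[OF char_two \<open>sidon M\<close> finite_class.finite] by blast
      then have "card S \<in> ?B"
        by blast
      then have "card S \<le> Max ?B"
        using finite(2) by simp
      then show ?thesis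
        using \<open>m = card M\<close> \<open>card S + 1 = card M\<close> by linarith
    qed (simp add: \<open>m = card M\<close>)
  qed
  obtain S :: "'a set" where "sidon S" "sum_free S" "Max ?B = card S"
    using Max_in[OF finite(2) \<open>?B \<noteq> {}\<close>] by blast
  have "card (insert 0 S) \<in> ?A"
    using sidon_insert_zero[OF \<open>sidon S\<close> \<open>sum_free S\<close>] by blast
  then have "card (insert 0 S) \<le> Max ?A"
    using finite(1) by simp
  with \<open>Max ?B = card S\<close> show "Max ?B + 1 \<le> Max ?A"
    using zero_notin_sum_free[OF \<open>sum_free S\<close>] by simp
qed

theorem proposition2p5:
  shows "s_max TYPE('n::finite) = s_sf_max TYPE('n) + 1"
  unfolding s_max_def s_sf_max_def
  by (rule Max_card_sidon_eq_Max_card_sum_free_sidon_plus_one[OF bit_vec_add_self])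

end
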